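(* Let $p,q$ be positive integers with $p+q$ odd. For every $n\ge1$, the map $\Delta_n:\mathcal{J}^{p,q}_n\to D_{2^{\lfloor n/2\rfloor+1}}$ is surjective.
   Context: Let $p,q$ be positive integers with $p+q$ odd. $\mathbb{Z}_{2^k}$ denotes the integers modulo $2^k$ ($\mathbb{Z}_1$ trivial); as $p+q$ is odd, division by $p+q$ and $(p+q)^2$ is well defined in $\mathbb{Z}_{2^k}$. For $m\ge1$, $D_{2m}$ is the dihedral group of order $2m$, realized as pairs $(f,x)$, $f\in\mathbb{Z}_2$, $x\in\mathbb{Z}_m$, with product $(f_1,x_1)(f_2,x_2)=(f_1+f_2,x_1+(-1)^{f_1}x_2)$. Define $\Phi:D_{2m}\to D_{2m}$, $\Phi((f,x))=(f,\delta(f=1)(p+q)(p-q)-x)$, where $\delta(f=1)$ is $1$ if $f=1$ and $0$ otherwise. $\mathrm{Aut}(T_1)$ is trivial; for $k\ge1$, $\mathrm{Aut}(T_{k+1})$ is the set of triples $g=(g_f,g_L,g_R)$, $g_f\in\mathbb{Z}_2$, $g_L,g_R\in\mathrm{Aut}(T_k)$, with product $(f,A,B)(g,C,D)=(f+g,AC,BD)$ if $f=0$ and $(f+g,AD,BC)$ if $f=1$; subscripts chain ($g_{LR}=(g_L)_R$, $g_{Lf}=(g_L)_f$). Recursively: $\mathcal{J}_1=\mathrm{Aut}(T_2)$, $\psi_1=0$, $\Delta_1(g)=(g_f,0)$; $\mathcal{J}_2=\{g\in\mathrm{Aut}(T_3):g_L=g_R\}$, $\psi_2(g)=\delta(g_{Lf}=1)\in\mathbb{Z}_2$,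 $\Delta_2(g)=(g_f,\psi_2(g))$; for $n\ge3$, $\mathcal{J}_n=\{g\in\mathrm{Aut}(T_{n+1}):g_L,g_R\in\mathcal{J}_{n-1},\ \Delta_{n-1}(g_L)=\Phi(\Delta_{n-1}(g_R))\}$, with $\psi_n:\mathcal{J}_n\to\mathbb{Z}_{2^{\lfloor n/2\rfloor}}$ given by $\psi_n(g)=(\psi_{n-1}(g_L)+\psi_{n-1}(g_R))/(p+q)$ for odd $n$ and $\psi_n(g)=\big(2(\psi_{n-2}(g_{LL})+\psi_{n-2}(g_{RL}))-\delta(g_{Lf}=1)(p+q)(p-q)\big)/(p+q)^2$ for even $n$ (with $2\psi_{n-2}(\cdot)$ read in $\mathbb{Z}_{2^{n/2}}$), and $\Delta_n:\mathcal{J}_n\to D_{2^{\lfloor n/2\rfloor+1}}$ given by $\Delta_n(g)=(g_f,\psi_{n-1}(g_L)-\psi_{n-1}(g_R))$ for odd $n$ and $\Delta_n(g)=(g_f,(p+q)\psi_n(g)-2\psi_{n-1}(g_R))$ for even $n$. *)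

theory Defs
  imports Main
begin

text \<open>Elements of Aut(T_k) as binary trees: Aut(T_1) = {Leaf};
  an element of Aut(T_{k+1}) is Node g_f g_L g_R with g_L, g_R in Aut(T_k).
  The flip bit g_f in Z_2 is encoded as a bool (True = 1).\<close>

datatype aut = Leaf | Node bool aut aut

fun af :: "aut \<Rightarrow> bool" where
  "af (Node f _ _) = f" | "af Leaf = False"
fun aL :: "aut \<Rightarrow> aut" where
  "aL (Node _ l _) = l" | "aL Leaf = Leaf"
fun aR :: "aut \<Rightarrow> aut" where
  "aR (Node _ _ r) = r" | "aR Leaf = Leaf"

text \<open>AutT k = Aut(T_k) for k \<ge> 1 (AutT 0 is unused).\<close>
fun AutT :: "nat \<Rightarrow> aut set" where
  "AutT 0 = {}"
| "AutT (Suc 0) = {Leaf}"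
| "AutT (Suc (Suc k)) = {Node f l r | f l r. l \<in> AutT (Suc k) \<and> r \<in> AutT (Suc k)}"

text \<open>Elements of Z_m are represented by integers in {0..<m}.
  divm m a x is x / a in Z_m: the unique y in {0..<m} with a*y = x (mod m).\<close>
definition divm :: "int \<Rightarrow> int \<Rightarrow> int \<Rightarrow> int" where
  "divm m a x = (THE y. 0 \<le> y \<and> y < m \<and> (a * y) mod m = x mod m)"

text \<open>Dihedral group D_{2m} as pairs (f, x), f in Z_2 (bool), x in Z_m.\<close>
definition Dih :: "int \<Rightarrow> (bool \<times> int) set" where
  "Dih m = {(f, x). 0 \<le> x \<and> x < m}"

definition Phi :: "int \<Rightarrow> int \<Rightarrow> int \<Rightarrow> bool \<times> int \<Rightarrow> bool \<times> int" where
  "Phi p q m d = (fst d, ((if fst d then (p + q) * (p - q) else 0) - snd d) mod m)"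

fun psi :: "int \<Rightarrow> int \<Rightarrow> nat \<Rightarrow> aut \<Rightarrow> int" where
  "psi p q 0 g = 0"
| "psi p q (Suc 0) g = 0"
| "psi p q (Suc (Suc 0)) g = (if af (aL g) then 1 else 0)"
| "psi p q (Suc (Suc (Suc n))) g =
    (let k = Suc (Suc (Suc n)) in
     if odd k then
       divm (2 ^ (k div 2)) (p + q) (psi p q (k - 1) (aL g) + psi p q (k - 1) (aR g))
     else
       divm (2 ^ (k div 2)) ((p + q) ^ 2)
         (2 * (psi p q (k - 2) (aL (aL g)) + psi p q (k - 2) (aL (aR g)))
          - (if af (aL g) then (p + q) * (p - q) else 0)))"

text \<open>Delta_n, with values in D_{2^(n div 2 + 1)}, i.e. second component in Z_{2^(n div 2)}.\<close>
fun Delta :: "int \<Rightarrow> int \<Rightarrow> nat \<Rightarrow> aut \<Rightarrow> bool \<times> int" where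
  "Delta p q 0 g = (af g, 0)"
| "Delta p q (Suc 0) g = (af g, 0)"
| "Delta p q (Suc (Suc 0)) g = (af g, psi p q 2 g)"
| "Delta p q (Suc (Suc (Suc n))) g =
    (let k = Suc (Suc (Suc n)) in
     if odd k then
       (af g, (psi p q (k - 1) (aL g) - psi p q (k - 1) (aR g)) mod 2 ^ (k div 2))
     else
       (af g, ((p + q) * psi p q k g - 2 * psi p q (k - 1) (aR g)) mod 2 ^ (k div 2)))"

fun J :: "int \<Rightarrow> int \<Rightarrow> nat \<Rightarrow> aut set" where
  "J p q 0 = {}"
| "J p q (Suc 0) = AutT 2"
| "J p q (Suc (Suc 0)) = {g \<in> AutT 3. aL g = aR g}"
| "J p q (Suc (Suc (Suc n))) =
    {g \<in> AutT (Suc (Suc (Suc (Suc n)))).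
       aL g \<in> J p q (Suc (Suc n)) \<and> aR g \<in> J p q (Suc (Suc n)) \<and>
       Delta p q (Suc (Suc n)) (aL g) =
         Phi p q (2 ^ (Suc (Suc n) div 2)) (Delta p q (Suc (Suc n)) (aR g))}"

end

theory Submission
  imports Defs "HOL-Number_Theory.Cong"
begin

(* Surjectivity follows from a stronger statement at the even levels n = 2k+2, where psi
   takes values modulo M = 2^(k+1): every pair (u, (f, v)) with u = v (mod 2) is
   (psi h, Delta h) for some h in J_n. From it, for all a, b mod M some node of J_(n+1)
   has children with psi-values a and b: the Phi-condition only prescribes the residue of
   Delta at the left child, and that residue has the parity of a because (p+q)(p-q) is odd.
   With b = 0 this is surjectivity at level n+1. Conversely, for g = Node f L R at level
   n+2, psi g and Delta g are determined by the psi-values of the grandchildren of g, and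
   the congruences making them equal to prescribed u and v are solvable because p+q is odd. *)

lemma even_mod_iff:
  fixes x m :: int
  assumes "even m"
  shows "even (x mod m) \<longleftrightarrow> even x"
  using assms by (simp add: even_iff_mod_2_eq_zero mod_mod_cancel)

lemma odd_sum_times_diff:
  fixes p q :: int
  assumes "odd (p + q)"
  shows "odd ((p + q) * (p - q))"
  using assms by simp

lemma divm_eqI:
  fixes m a x y :: int
  assumes "coprime a m" "y \<in> {0..<m}" "[a * y = x] (mod m)"
  shows "divm m a x = y"
  unfolding divm_def
proof (rule the_equality)
  show "0 \<le> y \<and> y < m \<and> (a * y) mod m = x mod m"
    using assms(2,3) by (simp add: cong_def)
next
  fix z assume z: "0 \<le> z \<and> z < m \<and> (a * z) mod m = x mod m"
  then have "[a * z = a * y] (mod m)"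
    using assms(3) by (simp add: cong_def)
  then have "[z = y] (mod m)"
    using assms(1) by (simp add: cong_mult_lcancel)
  then show "z = y"
    using z assms(2) by (auto intro: cong_less_imp_eq_int)
qed

lemma divm_mem_cong:
  fixes m a x :: int
  assumes "coprime a m" "m > 0"
  shows "divm m a x \<in> {0..<m}" "[a * divm m a x = x] (mod m)"
proof -
  obtain z where "[a * z = x] (mod m)"
    using cong_solve_dvd_int[of a m x] assms(1) by auto
  then have z: "[a * (z mod m) = x] (mod m)"
    by (metis cong_def mod_mult_right_eq)
  have z_mem: "z mod m \<in> {0..<m}"
    using assms(2) by simp
  have "divm m a x = z mod m"
    using assms(1) z_mem z by (rule divm_eqI)
  with z_mem z show "divm m a x \<in> {0..<m}" "[a * divm m a x = x] (mod m)"
    by simp_all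
qed

(* For g = Node f L R at an even level: S = p+q, E is the correction term of psi_even,
   and X, b1, b2 are the psi-values chosen for aL (aR g), aR (aL g), aR (aR g), the one
   for aL (aL g) being 0. The three congruences give g \<in> J, psi g = u and Delta g = (f, v). *)
lemma solve_even_level_congruences:
  fixes S E u v m :: int
  assumes "odd S" "coprime S m" "m > 0" "even (u + E)" "even (v + E)"
  obtains X b1 b2 where "X \<in> {0..<m}" "b1 \<in> {0..<m}" "b2 \<in> {0..<m}"
    "[- b1 = E - (X - b2)] (mod m)"
    "[S^2 * u = 2 * X - E] (mod 2 * m)"
    "\<And>w. [S * w = X + b2] (mod m) \<Longrightarrow> [S * u - 2 * w = v] (mod 2 * m)"
proof -
  define W where "W = S^2 * u + E"
  define V where "V = S * v + E"
  have "even W" "even V"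
    using assms(1,4,5) by (simp_all add: W_def V_def)
  define X where "X = (W div 2) mod m"
  define b2 where "b2 = (- (V div 2)) mod m"
  define b1 where "b1 = (X - b2 - E) mod m"
  have X_cong: "[W = 2 * X] (mod 2 * m)"
    using \<open>even W\<close> by (simp add: X_def cong_def mod_mult_mult1[symmetric])
  then have X: "(2 * m) dvd W - 2 * X"
    by (simp add: cong_iff_dvd_diff)
  have "[2 * b2 = - V] (mod 2 * m)"
    using \<open>even V\<close> by (simp add: b2_def cong_def mod_mult_mult1[symmetric])
  then have b2: "(2 * m) dvd 2 * b2 + V"
    by (simp add: cong_iff_dvd_diff)
  show thesis
  proof (rule that)
    show "X \<in> {0..<m}" "b1 \<in> {0..<m}" "b2 \<in> {0..<m}"
      using assms(3) by (simp_all add: X_def b1_def b2_def)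
    have "[- b1 = - (X - b2 - E)] (mod m)"
      unfolding cong_minus_minus_iff by (simp add: b1_def)
    then show "[- b1 = E - (X - b2)] (mod m)"
      by (simp add: algebra_simps)
    show "[S^2 * u = 2 * X - E] (mod 2 * m)"
      using cong_diff[OF X_cong cong_refl[of E]] by (simp add: W_def)
  next
    fix w assume "[S * w = X + b2] (mod m)"
    then have "m dvd S * w - (X + b2)"
      by (simp add: cong_iff_dvd_diff)
    then have w: "(2 * m) dvd 2 * (S * w - (X + b2))"
      by (rule mult_dvd_mono[OF dvd_refl])
    have "(2 * m) dvd (W - 2 * X) - (2 * b2 + V) - 2 * (S * w - (X + b2))"
      using X b2 w by (blast intro: dvd_diff)
    also have "(W - 2 * X) - (2 * b2 + V) - 2 * (S * w - (X + b2)) = S * (S * u - 2 * w - v)"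
      by (simp add: W_def V_def algebra_simps power2_eq_square)
    finally have "(2 * m) dvd S * (S * u - 2 * w - v)" .
    moreover have "coprime (2 * m) S"
      using assms(1,2) by (simp add: coprime_commute)
    ultimately show "[S * u - 2 * w = v] (mod 2 * m)"
      by (simp add: cong_iff_dvd_diff coprime_dvd_mult_right_iff)
  qed
qed

lemma psi_odd:
  "psi p q (2*k+3) g =
    divm (2^(k+1)) (p+q) (psi p q (2*k+2) (aL g) + psi p q (2*k+2) (aR g))"
proof -
  have "2*k+3 = Suc (Suc (Suc (2*k)))" by simp
  then show ?thesis by (simp only:) (simp add: Let_def)
qed

lemma psi_even:
  "psi p q (2*k+4) g = divm (2^(k+2)) ((p+q)^2)
     (2 * (psi p q (2*k+2) (aL (aL g)) + psi p q (2*k+2) (aL (aR g)))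
      - (if af (aL g) then (p+q)*(p-q) else 0))"
proof -
  have "2*k+4 = Suc (Suc (Suc (2*k+1)))" by simp
  then show ?thesis by (simp only:) (simp add: Let_def)
qed

lemma Delta_odd:
  "Delta p q (2*k+3) g =
    (af g, (psi p q (2*k+2) (aL g) - psi p q (2*k+2) (aR g)) mod 2^(k+1))"
proof -
  have "2*k+3 = Suc (Suc (Suc (2*k)))" by simp
  then show ?thesis by (simp only:) (simp add: Let_def)
qed

lemma Delta_even:
  "Delta p q (2*k+4) g =
    (af g, ((p+q) * psi p q (2*k+4) g - 2 * psi p q (2*k+3) (aR g)) mod 2^(k+2))"
proof -
  have "2*k+4 = Suc (Suc (Suc (2*k+1)))" by simp
  then show ?thesis by (simp only:) (simp add: Let_def numeral_3_eq_3 del: psi.simps)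
qed

lemma J_subset_AutT: "n \<ge> 1 \<Longrightarrow> J p q n \<subseteq> AutT (Suc n)"
  by (induction p q n rule: J.induct) (auto simp: numeral_2_eq_2 numeral_3_eq_3)

lemma Node_in_J_Suc:
  assumes "n \<ge> 2"
  shows "Node e L R \<in> J p q (Suc n) \<longleftrightarrow>
    L \<in> J p q n \<and> R \<in> J p q n \<and> Delta p q n L = Phi p q (2 ^ (n div 2)) (Delta p q n R)"
proof -
  obtain m where n: "n = Suc (Suc m)" using assms by (metis add_2_eq_Suc le_Suc_ex)
  have "L \<in> AutT (Suc n)" "R \<in> AutT (Suc n)" if "L \<in> J p q n" "R \<in> J p q n"
    using that J_subset_AutT[of n p q] assms by auto
  then show ?thesis unfolding n by auto
qed

(* The parity condition is forced: snd (Delta h) = psi h (mod 2) by Delta_even, as p+q is odd. *)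
definition psi_Delta_onto :: "int \<Rightarrow> int \<Rightarrow> nat \<Rightarrow> bool" where
  "psi_Delta_onto p q n \<longleftrightarrow>
    (\<forall>f u v. u \<in> {0..<2 ^ (n div 2)} \<longrightarrow> v \<in> {0..<2 ^ (n div 2)} \<longrightarrow> even (u - v) \<longrightarrow>
       (\<exists>h\<in>J p q n. psi p q n h = u \<and> Delta p q n h = (f, v)))"

definition children_psi_onto :: "int \<Rightarrow> int \<Rightarrow> nat \<Rightarrow> bool" where
  "children_psi_onto p q n \<longleftrightarrow>
    (\<forall>f a b. a \<in> {0..<2 ^ (n div 2)} \<longrightarrow> b \<in> {0..<2 ^ (n div 2)} \<longrightarrow>
       (\<exists>h\<in>J p q (Suc n). af h = f \<and> psi p q n (aL h) = a \<and> psi p q n (aR h) = b))"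

lemma psi_Delta_ontoD:
  assumes "psi_Delta_onto p q n"
    and "u \<in> {0..<2 ^ (n div 2)}" "v \<in> {0..<2 ^ (n div 2)}" "even (u - v)"
  obtains h where "h \<in> J p q n" "psi p q n h = u" "Delta p q n h = (f, v)"
  using assms unfolding psi_Delta_onto_def by blast

lemma children_psi_ontoD:
  assumes "children_psi_onto p q n" "a \<in> {0..<2 ^ (n div 2)}" "b \<in> {0..<2 ^ (n div 2)}"
  obtains h where "h \<in> J p q (Suc n)" "af h = f" "psi p q n (aL h) = a" "psi p q n (aR h) = b"
  using assms unfolding children_psi_onto_def by blast

lemma psi_Delta_onto_2: "psi_Delta_onto p q 2"
  unfolding psi_Delta_onto_def
proof (intro allI impI)
  fix f and u v :: int
  assume "u \<in> {0..<2 ^ (2 div 2)}" "v \<in> {0..<2 ^ (2 div 2)}" "even (u - v)"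
  then have "v = u" "u = 0 \<or> u = 1"
    by auto presburger+
  define L where "L = Node (u = 1) Leaf Leaf"
  have "Node f L L \<in> J p q 2" "psi p q 2 (Node f L L) = u" "Delta p q 2 (Node f L L) = (f, v)"
    using \<open>v = u\<close> \<open>u = 0 \<or> u = 1\<close> by (auto simp: L_def numeral_2_eq_2 numeral_3_eq_3)
  then show "\<exists>h\<in>J p q 2. psi p q 2 h = u \<and> Delta p q 2 h = (f, v)"
    by blast
qed

(* Beyond level 2, membership in J is handled by Node_in_J_Suc: letting simp unfold J and
   AutT only blows up the goals. *)
declare J.simps [simp del] AutT.simps [simp del]

lemma children_psi_onto_if_psi_Delta_onto:
  assumes "odd (p + q)" "psi_Delta_onto p q (2*k+2)"
  shows "children_psi_onto p q (2*k+2)"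
  unfolding children_psi_onto_def
proof (intro allI impI)
  fix f and a b :: int
  define M :: int where "M = 2 ^ ((2*k+2) div 2)"
  assume a: "a \<in> {0..<M}" and b: "b \<in> {0..<M}"
  define t where "t = odd (a + b)"
  define v where "v = ((if t then (p + q) * (p - q) else 0) - b) mod M"
  have v: "v \<in> {0..<M}"
    by (simp add: v_def M_def)
  have "even (a - v)"
    using odd_sum_times_diff[OF assms(1)]
    by (simp add: v_def t_def M_def even_mod_iff)
  with a v obtain L
    where L: "L \<in> J p q (2*k+2)" "psi p q (2*k+2) L = a" "Delta p q (2*k+2) L = (t, v)"
    unfolding M_def by (rule psi_Delta_ontoD[OF assms(2)])
  have "even (b - b)"
    by simp
  with b obtain R
    where R: "R \<in> J p q (2*k+2)" "psi p q (2*k+2) R = b" "Delta p q (2*k+2) R = (t, b)"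
    unfolding M_def by (rule psi_Delta_ontoD[OF assms(2) _ b[unfolded M_def]])
  have "Delta p q (2*k+2) L = Phi p q M (Delta p q (2*k+2) R)"
    using L(3) R(3) by (simp add: Phi_def v_def)
  then have "Node f L R \<in> J p q (Suc (2*k+2))"
    using L(1) R(1) Node_in_J_Suc[OF le_add2] unfolding M_def by blast
  then show "\<exists>h\<in>J p q (Suc (2*k+2)).
      af h = f \<and> psi p q (2*k+2) (aL h) = a \<and> psi p q (2*k+2) (aR h) = b"
    using L(2) R(2) by force
qed

lemma psi_Delta_onto_if_children_psi_onto:
  assumes "odd (p + q)" "children_psi_onto p q (2*k+2)"
  shows "psi_Delta_onto p q (2*k+4)"
  unfolding psi_Delta_onto_def
proof (intro allI impI)
  fix f and u v :: int
  define M :: int where "M = 2 ^ (k+1)"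
  have M2: "2 ^ (k+2) = 2 * M" "2 ^ ((2*k+4) div 2) = 2 * M" "2 ^ ((2*k+2) div 2) = M"
    by (simp_all add: M_def)
  assume "u \<in> {0..<2 ^ ((2*k+4) div 2)}" "v \<in> {0..<2 ^ ((2*k+4) div 2)}" "even (u - v)"
  then have u: "u \<in> {0..<2 * M}" and v: "v \<in> {0..<2 * M}" and "even (u - v)"
    unfolding M2 .
  define S where "S = p + q"
  define E where "E = (if odd u then (p + q) * (p - q) else 0)"
  have "odd S" "coprime S M" "M > 0"
    using assms(1) by (simp_all add: S_def M_def)
  moreover have "even (u + E)" "even (v + E)"
    using odd_sum_times_diff[OF assms(1)] \<open>even (u - v)\<close> by (auto simp: E_def)
  ultimately obtain X b1 b2
    where X: "X \<in> {0..<M}" and b1: "b1 \<in> {0..<M}" and b2: "b2 \<in> {0..<M}"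
    and J_cong: "[- b1 = E - (X - b2)] (mod M)"
    and psi_cong: "[S^2 * u = 2 * X - E] (mod 2 * M)"
    and Delta_cong: "\<And>w. [S * w = X + b2] (mod M) \<Longrightarrow> [S * u - 2 * w = v] (mod 2 * M)"
    using solve_even_level_congruences by blast
  have "Suc (2*k+2) = 2*k+3"
    by simp
  note children = children_psi_ontoD[OF assms(2), unfolded M2 this]
  have "0 \<in> {0..<M}"
    using \<open>M > 0\<close> by simp
  obtain L where L: "L \<in> J p q (2*k+3)" "af L = odd u"
      "psi p q (2*k+2) (aL L) = 0" "psi p q (2*k+2) (aR L) = b1"
    by (rule children[OF \<open>0 \<in> {0..<M}\<close> b1])
  obtain R where R: "R \<in> J p q (2*k+3)" "af R = odd u"
      "psi p q (2*k+2) (aL R) = X" "psi p q (2*k+2) (aR R) = b2"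
    by (rule children[OF X b2])
  define g where "g = Node f L R"
  have "Delta p q (2*k+3) L = Phi p q M (Delta p q (2*k+3) R)"
    using L R J_cong by (simp add: Delta_odd Phi_def cong_def E_def M_def mod_diff_right_eq)
  then have "g \<in> J p q (2*k+4)"
    using L(1) R(1) Node_in_J_Suc[of "2*k+3" f L R p q] by (simp add: g_def M_def add.commute)
  moreover have "psi p q (2*k+4) g = u"
  proof -
    have "psi p q (2*k+4) g = divm (2 * M) (S^2) (2 * X - E)"
      using L R by (simp add: g_def psi_even M_def S_def E_def)
    also have "\<dots> = u"
      using \<open>odd S\<close> \<open>coprime S M\<close> u psi_cong by (intro divm_eqI) simp_all
    finally show ?thesis .
  qed
  moreover have "Delta p q (2*k+4) g = (f, v)"
  proof -
    define w where "w = psi p q (2*k+3) R"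
    have "w = divm M S (X + b2)"
      using R by (simp add: w_def psi_odd S_def M_def)
    then have "[S * w = X + b2] (mod M)"
      using divm_mem_cong(2) \<open>coprime S M\<close> \<open>M > 0\<close> by simp
    then have "(S * u - 2 * w) mod (2 * M) = v"
      using Delta_cong v by (simp add: cong_def)
    then show ?thesis
      using \<open>psi p q (2*k+4) g = u\<close> by (simp add: g_def Delta_even M_def w_def S_def)
  qed
  ultimately show "\<exists>h\<in>J p q (2*k+4). psi p q (2*k+4) h = u \<and> Delta p q (2*k+4) h = (f, v)"
    by blast
qed

lemma psi_Delta_onto_even_level:
  assumes "odd (p + q)"
  shows "psi_Delta_onto p q (2*k+2)"
proof (induction k)
  case 0
  show ?case
    using psi_Delta_onto_2 by (simp only: mult_0_right add_0)
next
  case (Suc k)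
  have "psi_Delta_onto p q (2*k+4)"
    using assms Suc.IH
    by (intro psi_Delta_onto_if_children_psi_onto children_psi_onto_if_psi_Delta_onto)
  moreover have "2 * Suc k + 2 = 2*k+4"
    by simp
  ultimately show ?case
    by (simp only:)
qed

lemma Delta_in_Dih:
  assumes "n \<ge> 1"
  shows "Delta p q n g \<in> Dih (2 ^ (n div 2))"
proof -
  have "n = 1 \<or> n = 2 \<or> (\<exists>k. n = 2*k+3) \<or> (\<exists>k. n = 2*k+4)"
    using assms by presburger
  then consider "n = 1" | "n = 2" | k where "n = 2*k+3" | k where "n = 2*k+4"
    by blast
  then show ?thesis
  proof cases
    case 1
    then show ?thesis by (simp add: Dih_def)
  next
    case 2
    then show ?thesis by (simp add: Dih_def numeral_2_eq_2)
  next
    case (3 k)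
    then show ?thesis by (simp add: Dih_def Delta_odd)
  next
    case (4 k)
    then show ?thesis by (simp add: Dih_def Delta_even)
  qed
qed

lemma Dih_subset_Delta_image_1: "Dih (2 ^ (1 div 2)) \<subseteq> Delta p q 1 ` J p q 1"
proof
  fix d assume "d \<in> Dih (2 ^ (1 div 2))"
  then obtain f x where "d = (f, x)" "0 \<le> x" "x < 1"
    by (auto simp: Dih_def)
  then have d: "d = (f, 0)"
    by simp
  have "Node f Leaf Leaf \<in> AutT (Suc (Suc 0))"
    by (simp add: AutT.simps)
  then have "Node f Leaf Leaf \<in> J p q 1"
    by (simp add: J.simps numeral_2_eq_2)
  moreover have "Delta p q 1 (Node f Leaf Leaf) = (f, 0)"
    by simp
  ultimately show "d \<in> Delta p q 1 ` J p q 1"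
    unfolding d by (rule rev_image_eqI[OF _ sym])
qed

lemma Dih_subset_Delta_image_even_level:
  assumes "odd (p + q)"
  shows "Dih (2 ^ ((2*k+2) div 2)) \<subseteq> Delta p q (2*k+2) ` J p q (2*k+2)"
proof
  fix d assume "d \<in> Dih (2 ^ ((2*k+2) div 2))"
  then obtain f x where d: "d = (f, x)" and x: "x \<in> {0..<2 ^ ((2*k+2) div 2)}"
    by (auto simp: Dih_def)
  have "x mod 2 < 2" "(2::int) \<le> 2 ^ ((2*k+2) div 2)"
    by simp_all
  then have "x mod 2 < 2 ^ ((2*k+2) div 2)"
    by (rule less_le_trans)
  then have u: "x mod 2 \<in> {0..<2 ^ ((2*k+2) div 2)}"
    by simp
  have "even (x mod 2 - x)"
    by (simp add: mod_eq_dvd_iff[symmetric])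
  with u x obtain h
    where h: "h \<in> J p q (2*k+2)" "psi p q (2*k+2) h = x mod 2" "Delta p q (2*k+2) h = (f, x)"
    by (rule psi_Delta_ontoD[OF psi_Delta_onto_even_level[OF assms]])
  show "d \<in> Delta p q (2*k+2) ` J p q (2*k+2)"
    unfolding d using h(1,3) by (rule rev_image_eqI[OF _ sym])
qed

lemma Dih_subset_Delta_image_odd_level:
  assumes "odd (p + q)"
  shows "Dih (2 ^ ((2*k+3) div 2)) \<subseteq> Delta p q (2*k+3) ` J p q (2*k+3)"
proof
  fix d assume "d \<in> Dih (2 ^ ((2*k+3) div 2))"
  then obtain f x where d: "d = (f, x)" and x: "x \<in> {0..<2 ^ ((2*k+2) div 2)}"
    by (auto simp: Dih_def)
  have children: "children_psi_onto p q (2*k+2)"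
    using assms by (intro children_psi_onto_if_psi_Delta_onto psi_Delta_onto_even_level)
  have zero: "0 \<in> {0..<2 ^ ((2*k+2) div 2) :: int}"
    by simp
  from children x zero obtain h where "h \<in> J p q (Suc (2*k+2))" and h: "af h = f"
      "psi p q (2*k+2) (aL h) = x" "psi p q (2*k+2) (aR h) = 0"
    by (rule children_psi_ontoD)
  moreover have "Suc (2*k+2) = 2*k+3"
    by simp
  ultimately have "h \<in> J p q (2*k+3)"
    by (simp only:)
  moreover have "Delta p q (2*k+3) h = (f, x)"
    using h x by (simp add: Delta_odd)
  ultimately show "d \<in> Delta p q (2*k+3) ` J p q (2*k+3)"
    unfolding d by (rule rev_image_eqI[OF _ sym])
qed

theorem lemma3:
  fixes p q :: int and n :: nat
  assumes "p > 0" and "q > 0" and "odd (p + q)" and "n \<ge> 1"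
  shows "Delta p q n ` J p q n = Dih (2 ^ (n div 2))"
proof
  show "Delta p q n ` J p q n \<subseteq> Dih (2 ^ (n div 2))"
    using Delta_in_Dih[OF assms(4)] by blast
  have "n = 1 \<or> (\<exists>k. n = 2*k+2) \<or> (\<exists>k. n = 2*k+3)"
    using assms(4) by presburger
  then consider "n = 1" | k where "n = 2*k+2" | k where "n = 2*k+3"
    by blast
  then show "Dih (2 ^ (n div 2)) \<subseteq> Delta p q n ` J p q n"
  proof cases
    case 1
    then show ?thesis using Dih_subset_Delta_image_1 by (simp only:)
  next
    case (2 k)
    then show ?thesis using Dih_subset_Delta_image_even_level[OF assms(3)] by (simp only:)
  next
    case (3 k)
    then show ?thesis using Dih_subset_Delta_image_odd_level[OF assms(3)] by (simp only:)
  qed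
qed

end
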